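(* Let $U=\{1,\dots,N\}$ be a finite population with a randomized design and exposure mapping as described in the context, and fix two exposures $d_k,d_l\in\Delta$. Define $$\widehat{\mathrm{Cov}}_A[\widehat{y^T_{HT}}(d_k),\widehat{y^T_{HT}}(d_l)] = \sum_{i\in U}\ \sum_{j\in U\setminus\{i\}:\ \pi_{ij}(d_k,d_l)>0} \frac{\mathbf{I}(D_i=d_k)\mathbf{I}(D_j=d_l)}{\pi_{ij}(d_k,d_l)}\,\frac{y_i(d_k)}{\pi_i(d_k)}\,\frac{y_j(d_l)}{\pi_j(d_l)}\,\big[\pi_{ij}(d_k,d_l)-\pi_i(d_k)\pi_j(d_l)\big]$$ $$\qquad - \sum_{i\in U}\ \sum_{j\in U:\ \pi_{ij}(d_k,d_l)=0}\left[\frac{\mathbf{I}(D_i=d_k)\,y_i(d_k)^2}{2\pi_i(d_k)}+\frac{\mathbf{I}(D_j=d_l)\,y_j(d_l)^2}{2\pi_j(d_l)}\right],$$ where $\pi_{ii}(d_k,d_l)=0$ for $k\neq l$ (so $j=i$ is included in the second sum). Then, for $k\neq l$, $$\mathrm{E}\big[\widehat{\mathrm{Cov}}_A[\widehat{y^T_{HT}}(d_k),\widehat{y^T_{HT}}(d_l)]\big]\le \mathrm{Cov}\big[\widehat{y^T_{HT}}(d_k),\widehat{y^T_{HT}}(d_l)\big],$$ where $\widehat{y^T_{HT}}(d)=\sum_{i=1}^N \mathbf{I}(D_i=d)\,y_i(d)/\pi_i(d)$ and expectations/covariances are over the randomization distribution of $\mathbf{Z}$.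
   Context: A finite population $U$ of units $i=1,\dots,N$. A random treatment assignment vector $\mathbf{Z}=(Z_1,\dots,Z_N)'$ takes values in $\Omega=\{\mathbf{z}\in\{1,\dots,M\}^N: p_{\mathbf{z}}>0\}$ with known probabilities $\Pr(\mathbf{Z}=\mathbf{z})=p_{\mathbf{z}}$. An exposure mapping $f:\Omega\times\Theta\to\Delta$, with $\Delta=\{d_1,\dots,d_K\}$ finite and unit traits $\theta_i\in\Theta$, gives unit $i$'s exposure $D_i=f(\mathbf{Z},\theta_i)$. Write $\pi_i(d)=\Pr(D_i=d)$, $\pi_{ij}(d,d')=\Pr(D_i=d,D_j=d')$ and $\pi_{ij}(d)=\pi_{ij}(d,d)$; it is assumed $0<\pi_i(d_k)<1$ for all $i,k$. Each unit has fixed (non-random) potential outcomes $y_i(d_1),\dots,y_i(d_K)$, and the observed outcome of unit $i$ is $y_i(D_i)$, so only quantities multiplied by $\mathbf{I}(D_i=d)$ for the realized $d$ are observed. *)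

theory Defs
  imports "HOL-Probability.Probability"
begin

definition assignments :: "nat \<Rightarrow> nat \<Rightarrow> (nat \<Rightarrow> nat) set" where
  "assignments N M = {z. (\<forall>i\<in>{1..N}. z i \<in> {1..M}) \<and> (\<forall>i. i \<notin> {1..N} \<longrightarrow> z i = 0)}"

definition expo :: "((nat \<Rightarrow> nat) \<Rightarrow> 'th \<Rightarrow> 'd) \<Rightarrow> (nat \<Rightarrow> 'th) \<Rightarrow> (nat \<Rightarrow> nat) \<Rightarrow> nat \<Rightarrow> 'd" where
  "expo f \<theta> z i = f z (\<theta> i)"

definition pi1 :: "(nat \<Rightarrow> nat) pmf \<Rightarrow> ((nat \<Rightarrow> nat) \<Rightarrow> 'th \<Rightarrow> 'd) \<Rightarrow> (nat \<Rightarrow> 'th) \<Rightarrow> nat \<Rightarrow> 'd \<Rightarrow> real" where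
  "pi1 Z f \<theta> i d = measure_pmf.prob Z {z. expo f \<theta> z i = d}"

definition pi2 :: "(nat \<Rightarrow> nat) pmf \<Rightarrow> ((nat \<Rightarrow> nat) \<Rightarrow> 'th \<Rightarrow> 'd) \<Rightarrow> (nat \<Rightarrow> 'th) \<Rightarrow> nat \<Rightarrow> nat \<Rightarrow> 'd \<Rightarrow> 'd \<Rightarrow> real" where
  "pi2 Z f \<theta> i j d d' = measure_pmf.prob Z {z. expo f \<theta> z i = d \<and> expo f \<theta> z j = d'}"

definition yHT :: "(nat \<Rightarrow> nat) pmf \<Rightarrow> ((nat \<Rightarrow> nat) \<Rightarrow> 'th \<Rightarrow> 'd) \<Rightarrow> (nat \<Rightarrow> 'th) \<Rightarrow> nat \<Rightarrow> (nat \<Rightarrow> 'd \<Rightarrow> real) \<Rightarrow> 'd \<Rightarrow> (nat \<Rightarrow> nat) \<Rightarrow> real" where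
  "yHT Z f \<theta> N y d z = (\<Sum>i\<in>{1..N}. of_bool (expo f \<theta> z i = d) * y i d / pi1 Z f \<theta> i d)"

definition covA :: "(nat \<Rightarrow> nat) pmf \<Rightarrow> ((nat \<Rightarrow> nat) \<Rightarrow> 'th \<Rightarrow> 'd) \<Rightarrow> (nat \<Rightarrow> 'th) \<Rightarrow> nat \<Rightarrow> (nat \<Rightarrow> 'd \<Rightarrow> real) \<Rightarrow> 'd \<Rightarrow> 'd \<Rightarrow> (nat \<Rightarrow> nat) \<Rightarrow> real" where
  "covA Z f \<theta> N y dk dl z =
     (\<Sum>i\<in>{1..N}. \<Sum>j\<in>{j\<in>{1..N} - {i}. pi2 Z f \<theta> i j dk dl > 0}.
        of_bool (expo f \<theta> z i = dk) * of_bool (expo f \<theta> z j = dl) / pi2 Z f \<theta> i j dk dl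
        * (y i dk / pi1 Z f \<theta> i dk) * (y j dl / pi1 Z f \<theta> j dl)
        * (pi2 Z f \<theta> i j dk dl - pi1 Z f \<theta> i dk * pi1 Z f \<theta> j dl))
   - (\<Sum>i\<in>{1..N}. \<Sum>j\<in>{j\<in>{1..N}. pi2 Z f \<theta> i j dk dl = 0}.
        of_bool (expo f \<theta> z i = dk) * (y i dk)\<^sup>2 / (2 * pi1 Z f \<theta> i dk)
        + of_bool (expo f \<theta> z j = dl) * (y j dl)\<^sup>2 / (2 * pi1 Z f \<theta> j dl))"

definition pmf_cov :: "'a pmf \<Rightarrow> ('a \<Rightarrow> real) \<Rightarrow> ('a \<Rightarrow> real) \<Rightarrow> real" where
  "pmf_cov P X Y = measure_pmf.expectation P (\<lambda>x. (X x - measure_pmf.expectation P X) * (Y x - measure_pmf.expectation P Y))"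

end

theory Submission imports Defs begin

text \<open>Every term of the estimator is unbiased for the matching term of the true covariance,
  except on the pairs with \<open>\<pi>\<^sub>i\<^sub>j(d\<^sub>k,d\<^sub>l) = 0\<close>, where the covariance term \<open>-y\<^sub>i(d\<^sub>k) y\<^sub>j(d\<^sub>l)\<close> has no
  unbiased estimator. There the estimator's expectation is \<open>-(y\<^sub>i(d\<^sub>k)\<^sup>2 + y\<^sub>j(d\<^sub>l)\<^sup>2)/2\<close>, which is at most
  \<open>-y\<^sub>i(d\<^sub>k) y\<^sub>j(d\<^sub>l)\<close> by Young's inequality. Since \<open>d\<^sub>k \<noteq> d\<^sub>l\<close>, the diagonal pairs \<open>j = i\<close> are of this kind.\<close>

lemma finite_assignments: "finite (assignments N M)"
proof -
  let ?ext = "\<lambda>g i. if i \<in> {1..N} then g i else 0"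
  have "assignments N M \<subseteq> ?ext ` PiE {1..N} (\<lambda>_. {1..M})"
  proof
    fix z assume z: "z \<in> assignments N M"
    show "z \<in> ?ext ` PiE {1..N} (\<lambda>_. {1..M})"
      by (rule image_eqI[where x = "restrict z {1..N}"]) (use z in \<open>auto simp: assignments_def\<close>)
  qed
  moreover have "finite (PiE {1..N} (\<lambda>_. {1..M::nat}))"
    by (rule finite_PiE) auto
  ultimately show ?thesis
    by (meson finite_imageI finite_subset)
qed

lemma expectation_of_bool_mult_const:
  "measure_pmf.expectation Z (\<lambda>z. of_bool (P z) * c) = measure_pmf.prob Z {z. P z} * c"
proof -
  have "(\<lambda>z. of_bool (P z) * c) = (\<lambda>z. indicator {z. P z} z * c)"
    by (auto simp: indicator_def)
  then show ?thesis
    by (simp add: measure_pmf.emeasure_finite del: integral_mult_left)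
qed

lemma expectation_sum_finite_support:
  fixes X :: "'i \<Rightarrow> 'a \<Rightarrow> real"
  assumes "finite (set_pmf Z)"
  shows "measure_pmf.expectation Z (\<lambda>z. \<Sum>i\<in>I. X i z) = (\<Sum>i\<in>I. measure_pmf.expectation Z (X i))"
  by (rule Bochner_Integration.integral_sum) (rule integrable_measure_pmf_finite[OF assms])

lemma pmf_cov_eq_expectation_mult_diff:
  assumes "finite (set_pmf P)"
  shows "pmf_cov P X Y = measure_pmf.expectation P (\<lambda>x. X x * Y x)
           - measure_pmf.expectation P X * measure_pmf.expectation P Y"
proof -
  have int: "integrable P g" for g :: "_ \<Rightarrow> real"
    using assms by (rule integrable_measure_pmf_finite)
  define c e where "c = measure_pmf.expectation P X" and "e = measure_pmf.expectation P Y"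
  have "(\<lambda>x. (X x - c) * (Y x - e)) = (\<lambda>x. X x * Y x - c * Y x - e * X x + c * e)"
    by (auto simp: algebra_simps)
  then show ?thesis
    unfolding pmf_cov_def c_def[symmetric] e_def[symmetric] by (simp add: int c_def e_def)
qed

lemma pi2_diag_eq_0:
  assumes "d \<noteq> d'"
  shows "pi2 Z f \<theta> i i d d' = 0"
  using assms by (simp add: pi2_def measure_pmf.prob_eq_0)

lemma yHT_eq_sum_of_bool_mult:
  "yHT Z f \<theta> N y d = (\<lambda>z. \<Sum>i\<in>{1..N}. of_bool (expo f \<theta> z i = d) * (y i d / pi1 Z f \<theta> i d))"
  by (simp add: yHT_def fun_eq_iff)

lemma expectation_yHT:
  assumes "finite (set_pmf Z)" and "\<forall>i\<in>{1..N}. pi1 Z f \<theta> i d \<noteq> 0"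
  shows "measure_pmf.expectation Z (yHT Z f \<theta> N y d) = (\<Sum>i\<in>{1..N}. y i d)"
proof -
  have "measure_pmf.expectation Z (yHT Z f \<theta> N y d)
      = (\<Sum>i\<in>{1..N}. pi1 Z f \<theta> i d * (y i d / pi1 Z f \<theta> i d))"
    using assms(1) unfolding yHT_eq_sum_of_bool_mult
    by (simp only: expectation_sum_finite_support expectation_of_bool_mult_const flip: pi1_def)
  also have "\<dots> = (\<Sum>i\<in>{1..N}. y i d)"
    using assms(2) by (intro sum.cong) auto
  finally show ?thesis .
qed

lemma expectation_yHT_mult:
  assumes "finite (set_pmf Z)"
  shows "measure_pmf.expectation Z (\<lambda>z. yHT Z f \<theta> N y d z * yHT Z f \<theta> N y d' z)
       = (\<Sum>i\<in>{1..N}. \<Sum>j\<in>{1..N}.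
            pi2 Z f \<theta> i j d d' * (y i d / pi1 Z f \<theta> i d) * (y j d' / pi1 Z f \<theta> j d'))"
proof -
  have "(\<lambda>z. yHT Z f \<theta> N y d z * yHT Z f \<theta> N y d' z)
      = (\<lambda>z. \<Sum>i\<in>{1..N}. \<Sum>j\<in>{1..N}. of_bool (expo f \<theta> z i = d \<and> expo f \<theta> z j = d')
               * ((y i d / pi1 Z f \<theta> i d) * (y j d' / pi1 Z f \<theta> j d')))"
    by (auto simp: yHT_eq_sum_of_bool_mult sum_product intro!: sum.cong)
  then show ?thesis
    using assms
    by (simp only: expectation_sum_finite_support expectation_of_bool_mult_const mult.assoc
        flip: pi2_def)
qed

lemma pmf_cov_yHT:
  assumes "finite (set_pmf Z)"
    and "\<forall>i\<in>{1..N}. pi1 Z f \<theta> i d \<noteq> 0" and "\<forall>i\<in>{1..N}. pi1 Z f \<theta> i d' \<noteq> 0"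
  shows "pmf_cov Z (yHT Z f \<theta> N y d) (yHT Z f \<theta> N y d')
       = (\<Sum>i\<in>{1..N}. \<Sum>j\<in>{1..N}.
            pi2 Z f \<theta> i j d d' * (y i d / pi1 Z f \<theta> i d) * (y j d' / pi1 Z f \<theta> j d') - y i d * y j d')"
proof -
  have "measure_pmf.expectation Z (yHT Z f \<theta> N y d) * measure_pmf.expectation Z (yHT Z f \<theta> N y d')
      = (\<Sum>i\<in>{1..N}. y i d) * (\<Sum>j\<in>{1..N}. y j d')"
    using expectation_yHT[OF assms(1,2)] expectation_yHT[OF assms(1,3)] by simp
  then show ?thesis
    by (simp add: pmf_cov_eq_expectation_mult_diff[OF assms(1)] expectation_yHT_mult[OF assms(1)]
        sum_product sum_subtractf)
qed

lemma expectation_covA: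
  assumes "finite (set_pmf Z)"
    and "\<forall>i\<in>{1..N}. pi1 Z f \<theta> i dk \<noteq> 0" and "\<forall>i\<in>{1..N}. pi1 Z f \<theta> i dl \<noteq> 0"
  shows "measure_pmf.expectation Z (covA Z f \<theta> N y dk dl)
       = (\<Sum>i\<in>{1..N}. \<Sum>j\<in>{j\<in>{1..N} - {i}. pi2 Z f \<theta> i j dk dl > 0}.
            pi2 Z f \<theta> i j dk dl * (y i dk / pi1 Z f \<theta> i dk) * (y j dl / pi1 Z f \<theta> j dl) - y i dk * y j dl)
       - (\<Sum>i\<in>{1..N}. \<Sum>j\<in>{j\<in>{1..N}. pi2 Z f \<theta> i j dk dl = 0}. (y i dk)\<^sup>2 / 2 + (y j dl)\<^sup>2 / 2)"
    (is "_ = ?rhs")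
proof -
  let ?p = "\<lambda>i. pi1 Z f \<theta> i dk" and ?q = "\<lambda>j. pi1 Z f \<theta> j dl" and ?r = "\<lambda>i j. pi2 Z f \<theta> i j dk dl"
  let ?A = "\<lambda>i. {j\<in>{1..N} - {i}. ?r i j > 0}" and ?B = "\<lambda>i. {j\<in>{1..N}. ?r i j = 0}"
  have int: "integrable Z g" for g :: "_ \<Rightarrow> real"
    using assms(1) by (rule integrable_measure_pmf_finite)
  have "covA Z f \<theta> N y dk dl = (\<lambda>z.
       (\<Sum>i\<in>{1..N}. \<Sum>j\<in>?A i. of_bool (expo f \<theta> z i = dk \<and> expo f \<theta> z j = dl)
          * (y i dk / ?p i * (y j dl / ?q j) * (?r i j - ?p i * ?q j) / ?r i j))
     - (\<Sum>i\<in>{1..N}. \<Sum>j\<in>?B i. of_bool (expo f \<theta> z i = dk) * ((y i dk)\<^sup>2 / (2 * ?p i))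
          + of_bool (expo f \<theta> z j = dl) * ((y j dl)\<^sup>2 / (2 * ?q j))))"
    unfolding covA_def by (intro ext arg_cong2[where f = minus] sum.cong) auto
  then have "measure_pmf.expectation Z (covA Z f \<theta> N y dk dl)
     = (\<Sum>i\<in>{1..N}. \<Sum>j\<in>?A i. ?r i j * (y i dk / ?p i * (y j dl / ?q j) * (?r i j - ?p i * ?q j) / ?r i j))
     - (\<Sum>i\<in>{1..N}. \<Sum>j\<in>?B i. ?p i * ((y i dk)\<^sup>2 / (2 * ?p i)) + ?q j * ((y j dl)\<^sup>2 / (2 * ?q j)))"
    by (simp only: Bochner_Integration.integral_diff[OF int int] Bochner_Integration.integral_add[OF int int]
        expectation_sum_finite_support[OF assms(1)] expectation_of_bool_mult_const flip: pi1_def pi2_def)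
  also have "\<dots> = ?rhs"
    using assms(2,3) by (intro arg_cong2[where f = minus] sum.cong refl) (auto simp: field_simps)
  finally show ?thesis .
qed

lemma sum_positive_pairs_minus_squares_le:
  fixes r g :: "'i \<Rightarrow> 'i \<Rightarrow> real" and a b :: "'i \<Rightarrow> real"
  assumes "finite I" and "\<And>i j. 0 \<le> r i j" and "\<And>i. r i i = 0"
    and "\<And>i j. r i j = 0 \<Longrightarrow> g i j = - (a i * b j)"
  shows "(\<Sum>i\<in>I. \<Sum>j\<in>{j\<in>I - {i}. 0 < r i j}. g i j)
           - (\<Sum>i\<in>I. \<Sum>j\<in>{j\<in>I. r i j = 0}. (a i)\<^sup>2 / 2 + (b j)\<^sup>2 / 2)
         \<le> (\<Sum>i\<in>I. \<Sum>j\<in>I. g i j)"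
  unfolding sum_subtractf[symmetric]
proof (rule sum_mono)
  fix i
  let ?A = "{j\<in>I - {i}. 0 < r i j}" and ?B = "{j\<in>I. r i j = 0}"
  have "I = ?A \<union> ?B" and "?A \<inter> ?B = {}"
    using assms(2,3) by (auto simp: less_le)
  then have "(\<Sum>j\<in>I. g i j) = (\<Sum>j\<in>?A. g i j) + (\<Sum>j\<in>?B. g i j)"
    using assms(1) by (metis (no_types, lifting) finite_Un sum.union_disjoint)
  moreover have "- ((a i)\<^sup>2 / 2 + (b j)\<^sup>2 / 2) \<le> g i j" if "j \<in> ?B" for j
  proof -
    have "0 \<le> (a i - b j)\<^sup>2"
      by simp
    then show ?thesis
      using that assms(4) by (simp add: power2_eq_square algebra_simps)
  qed
  then have "- (\<Sum>j\<in>?B. (a i)\<^sup>2 / 2 + (b j)\<^sup>2 / 2) \<le> (\<Sum>j\<in>?B. g i j)"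
    unfolding sum_negf[symmetric] by (rule sum_mono)
  ultimately show "(\<Sum>j\<in>?A. g i j) - (\<Sum>j\<in>?B. (a i)\<^sup>2 / 2 + (b j)\<^sup>2 / 2) \<le> (\<Sum>j\<in>I. g i j)"
    by simp
qed

theorem mainTheorem1:
  fixes N M :: nat
    and Z :: "(nat \<Rightarrow> nat) pmf"
    and f :: "(nat \<Rightarrow> nat) \<Rightarrow> 'th \<Rightarrow> 'd"
    and \<theta> :: "nat \<Rightarrow> 'th"
    and \<Delta> :: "'d set"
    and y :: "nat \<Rightarrow> 'd \<Rightarrow> real"
    and dk dl :: 'd
  assumes "set_pmf Z \<subseteq> assignments N M"
    and "finite \<Delta>"
    and "\<And>z i. z \<in> set_pmf Z \<Longrightarrow> f z (\<theta> i) \<in> \<Delta>"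
    and "\<And>i d. i \<in> {1..N} \<Longrightarrow> d \<in> \<Delta> \<Longrightarrow> 0 < pi1 Z f \<theta> i d \<and> pi1 Z f \<theta> i d < 1"
    and "dk \<in> \<Delta>" and "dl \<in> \<Delta>" and "dk \<noteq> dl"
  shows "measure_pmf.expectation Z (covA Z f \<theta> N y dk dl)
           \<le> pmf_cov Z (yHT Z f \<theta> N y dk) (yHT Z f \<theta> N y dl)"
proof -
  have fin: "finite (set_pmf Z)"
    using assms(1) finite_assignments finite_subset by blast
  have pk: "\<forall>i\<in>{1..N}. pi1 Z f \<theta> i dk \<noteq> 0" and pl: "\<forall>i\<in>{1..N}. pi1 Z f \<theta> i dl \<noteq> 0"
    using assms(4,5,6) by (auto simp: less_le)
  show ?thesis
    unfolding expectation_covA[OF fin pk pl] pmf_cov_yHT[OF fin pk pl]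
    by (rule sum_positive_pairs_minus_squares_le) (use pi2_diag_eq_0[OF assms(7)] in \<open>auto simp: pi2_def\<close>)
qed

end
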